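(* Let $\alpha,\beta>0$ with $\beta\neq\alpha$, and set $\tau=(\beta-\alpha)^{-1}$. Let $S_0>0$, $I_0\ge 0$, $R_0$ be real numbers with $S_0+I_0+R_0=1$. Then the solution of the system $$\dot S=-\frac{\beta SI}{S+I},\qquad \dot I=\frac{\beta SI}{S+I}-\alpha I,\qquad \dot R=\alpha I$$ with initial conditions $S(0)=S_0$, $I(0)=I_0$, $R(0)=R_0$ is given by $$S(t)=S_0\left(\frac{S_0+I_0}{S_0+I_0e^{t/\tau}}\right)^{\beta\tau},\qquad I(t)=I_0\left(\frac{S_0+I_0}{S_0+I_0e^{t/\tau}}\right)^{\beta\tau}e^{t/\tau},\qquad R(t)=1-\frac{(S_0+I_0)^{\beta\tau}}{(S_0+I_0e^{t/\tau})^{\beta\tau-1}}.$$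
   Context: This is the "modified SIR" epidemiological model, in which $S,I,R$ denote the fractions of susceptible, infective and recovered (removed) individuals; the total population $S+I+R$ is conserved and normalized to $1$. *)

theory Defs
  imports Complex_Main
begin

end

theory Submission
  imports Defs "HOL-Analysis.Analysis"
begin

(* Along a solution with S > 0 and S + I > 0, both I and S e^(t/tau) satisfy the same scalar
   linear equation y' = (beta S / (S + I) - alpha) y, so I / S = (I0 / S0) e^(t/tau).  Substituted
   into the S-equation this gives the linear equation S' = -beta I0 e^(t/tau) / (S0 + I0 e^(t/tau)) S,
   which the closed form also solves; I follows, and R = 1 - S - I since S + I + R is conserved.
   The positivity needed for these comparisons cannot fail at a first time, because there S and I
   still agree with the closed forms, which keep S > 0 and S + I > 0. *)

lemma linear_ode_solutions_ratio_constant: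
  fixes y z a :: "real \<Rightarrow> real"
  assumes "\<And>s. s \<in> {t0..t1} \<Longrightarrow> (y has_real_derivative a s * y s) (at s within {t0..t1})"
    and "\<And>s. s \<in> {t0..t1} \<Longrightarrow> (z has_real_derivative a s * z s) (at s within {t0..t1})"
    and "\<And>s. s \<in> {t0..t1} \<Longrightarrow> z s \<noteq> 0"
    and "t \<in> {t0..t1}"
  shows "y t / z t = y t0 / z t0"
proof -
  have "\<exists>c. \<forall>s\<in>{t0..t1}. y s / z s = c"
  proof (rule has_field_derivative_zero_constant)
    fix s assume s: "s \<in> {t0..t1}"
    have "((\<lambda>s. y s / z s) has_real_derivative
            (a s * y s * z s - y s * (a s * z s)) / (z s * z s)) (at s within {t0..t1})"
      using assms(1-3)[OF s] by (rule DERIV_divide)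
    then show "((\<lambda>s. y s / z s) has_real_derivative 0) (at s within {t0..t1})"
      by (simp add: algebra_simps)
  qed (rule convex_real_interval)
  then show ?thesis using assms(4) by auto
qed

lemma continuous_on_eq_at_right_end:
  fixes f g :: "real \<Rightarrow> real"
  assumes "continuous_on {a..b} f" "continuous_on {a..b} g" "a < b"
    and "\<And>s. s \<in> {a..<b} \<Longrightarrow> f s = g s"
  shows "f b = g b"
proof -
  have "f b - g b = 0"
    by (rule continuous_constant_on_closure[of "{a..<b}"])
       (use assms in \<open>auto intro!: continuous_on_diff\<close>)
  then show ?thesis by simp
qed

lemma positive_on_interval_by_continuation:
  fixes g :: "real \<Rightarrow> real"
  assumes cont: "continuous_on {a..c} g" and start: "g a > 0"
    and step: "\<And>b. b \<in> {a<..c} \<Longrightarrow> (\<forall>s\<in>{a..<b}. g s > 0) \<Longrightarrow> g b > 0"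
  shows "\<forall>s\<in>{a..c}. g s > 0"
proof (rule ccontr)
  define K where "K = {a..c} \<inter> g -` {..0}"
  assume "\<not> (\<forall>s\<in>{a..c}. g s > 0)"
  then have "K \<noteq> {}" by (auto simp: K_def)
  moreover have bdd: "bdd_below K" by (auto simp: K_def intro: bdd_belowI)
  moreover have "closed K"
    unfolding K_def by (rule continuous_closed_preimage[OF cont]) auto
  ultimately have first: "Inf K \<in> K" by (rule closed_contains_Inf)
  with start have "Inf K \<in> {a<..c}" by (auto simp: K_def order.order_iff_strict)
  moreover have "\<forall>s\<in>{a..<Inf K}. g s > 0"
    using cInf_lower[OF _ bdd] \<open>Inf K \<in> {a<..c}\<close> by (fastforce simp: K_def)
  ultimately have "g (Inf K) > 0" by (rule step)
  with first show False by (simp add: K_def)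
qed

definition msir_solution ::
    "real \<Rightarrow> real \<Rightarrow> (real \<Rightarrow> real) \<Rightarrow> (real \<Rightarrow> real) \<Rightarrow> (real \<Rightarrow> real) \<Rightarrow> bool" where
  "msir_solution \<alpha> \<beta> S I R \<longleftrightarrow> (\<forall>t\<ge>0.
     (S has_real_derivative (- \<beta> * S t * I t / (S t + I t))) (at t within {0..}) \<and>
     (I has_real_derivative (\<beta> * S t * I t / (S t + I t) - \<alpha> * I t)) (at t within {0..}) \<and>
     (R has_real_derivative (\<alpha> * I t)) (at t within {0..}))"

lemma msir_solution_continuous:
  assumes "msir_solution \<alpha> \<beta> S I R"
  shows "continuous_on {0..} S" "continuous_on {0..} I"
  using assms unfolding msir_solution_def by (auto intro!: DERIV_continuous_on)

lemma msir_solution_within_interval: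
  assumes "msir_solution \<alpha> \<beta> S I R" and "t \<in> {0..b}"
  shows "(S has_real_derivative (- \<beta> * S t * I t / (S t + I t))) (at t within {0..b})"
    and "(I has_real_derivative (\<beta> * S t * I t / (S t + I t) - \<alpha> * I t)) (at t within {0..b})"
  using assms unfolding msir_solution_def by (auto intro: DERIV_subset)

lemma msir_population_conserved:
  assumes "msir_solution \<alpha> \<beta> S I R" and "t \<ge> 0"
  shows "S t + I t + R t = S 0 + I 0 + R 0"
proof -
  have "\<exists>c. \<forall>s\<in>{0..}. S s + I s + R s = c"
  proof (rule has_field_derivative_zero_constant)
    fix s :: real assume "s \<in> {0..}"
    then have "((\<lambda>s. S s + I s + R s) has_real_derivative
        - \<beta> * S s * I s / (S s + I s) + (\<beta> * S s * I s / (S s + I s) - \<alpha> * I s) + \<alpha> * I s)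
        (at s within {0..})"
      using assms(1) unfolding msir_solution_def by (intro DERIV_add) auto
    then show "((\<lambda>s. S s + I s + R s) has_real_derivative 0) (at s within {0..})"
      by simp
  qed (rule convex_real_interval)
  then show ?thesis using assms(2) by force
qed

locale msir_closed_form =
  fixes \<alpha> \<beta> S0 I0 :: real
  assumes rates_differ: "\<beta> \<noteq> \<alpha>" and S0_pos: "S0 > 0" and I0_nonneg: "I0 \<ge> 0"
begin

(* With tau = 1 / (beta - alpha), growth t is the paper's e^(t/tau) and damping t is the factor
   ((S0 + I0) / (S0 + I0 e^(t/tau)))^(beta tau) shared by the closed forms of S and I. *)

definition growth :: "real \<Rightarrow> real" where
  "growth t = exp (t * (\<beta> - \<alpha>))"

definition denom :: "real \<Rightarrow> real" where
  "denom t = S0 + I0 * growth t"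

definition damping :: "real \<Rightarrow> real" where
  "damping t = ((S0 + I0) / denom t) powr (\<beta> / (\<beta> - \<alpha>))"

definition S_closed :: "real \<Rightarrow> real" where
  "S_closed t = S0 * damping t"

definition I_closed :: "real \<Rightarrow> real" where
  "I_closed t = I0 * damping t * growth t"

lemma growth_pos: "growth t > 0"
  by (simp add: growth_def)

lemma denom_pos: "denom t > 0"
  using S0_pos I0_nonneg growth_pos[of t] by (simp add: denom_def add_pos_nonneg)

lemma damping_pos: "damping t > 0"
  using S0_pos I0_nonneg denom_pos[of t] by (simp add: damping_def)

lemma S_closed_pos: "S_closed t > 0"
  using S0_pos damping_pos by (simp add: S_closed_def)

lemma I_closed_nonneg: "I_closed t \<ge> 0"
  using I0_nonneg damping_pos[of t] growth_pos[of t] by (simp add: I_closed_def)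

lemma closed_form_at_0: "S_closed 0 = S0" "I_closed 0 = I0"
  using S0_pos I0_nonneg
  by (simp_all add: S_closed_def I_closed_def damping_def denom_def growth_def)

lemma S_closed_plus_I_closed: "S_closed t + I_closed t = damping t * denom t"
  by (simp add: S_closed_def I_closed_def denom_def algebra_simps)

lemma S_closed_plus_I_closed_powr:
  "S_closed t + I_closed t = (S0 + I0) powr (\<beta> / (\<beta> - \<alpha>)) / denom t powr (\<beta> / (\<beta> - \<alpha>) - 1)"
  using S0_pos I0_nonneg denom_pos[of t]
  by (simp add: S_closed_plus_I_closed damping_def powr_diff powr_divide)

lemma I_closed_fraction: "I_closed t / (S_closed t + I_closed t) = I0 * growth t / denom t"
  unfolding S_closed_plus_I_closed using damping_pos[of t] by (simp add: I_closed_def)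

lemma growth_has_derivative: "(growth has_real_derivative (\<beta> - \<alpha>) * growth t) (at t)"
  unfolding growth_def by (auto intro!: derivative_eq_intros)

lemma damping_has_derivative:
  "(damping has_real_derivative - \<beta> * I0 * growth t / denom t * damping t) (at t)"
proof -
  have damping_exp: "damping = (\<lambda>t. exp (\<beta> / (\<beta> - \<alpha>) * (ln (S0 + I0) - ln (denom t))))"
  proof
    fix t
    have "S0 + I0 > 0" "denom t > 0" using S0_pos I0_nonneg denom_pos by auto
    then show "damping t = exp (\<beta> / (\<beta> - \<alpha>) * (ln (S0 + I0) - ln (denom t)))"
      by (simp add: damping_def powr_def ln_div)
  qed
  have "(damping has_real_derivative
      damping t * (\<beta> / (\<beta> - \<alpha>) * (0 - I0 * ((\<beta> - \<alpha>) * growth t) / denom t))) (at t)"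
    using denom_pos[of t] unfolding damping_exp denom_def
    by (auto intro!: derivative_eq_intros growth_has_derivative)
  then show ?thesis
    by (rule DERIV_cong) (use rates_differ denom_pos[of t] in \<open>simp add: field_simps\<close>)
qed

lemma S_closed_has_derivative:
  "(S_closed has_real_derivative - \<beta> * I0 * growth t / denom t * S_closed t) (at t)"
  unfolding S_closed_def[abs_def]
  by (rule DERIV_cong[OF DERIV_cmult[OF damping_has_derivative]]) simp

lemma closed_form_solves:
  "msir_solution \<alpha> \<beta> S_closed I_closed (\<lambda>t. 1 - S_closed t - I_closed t)"
proof -
  have incidence: "\<beta> * S_closed t * I_closed t / (S_closed t + I_closed t)
      = \<beta> * I0 * growth t / denom t * S_closed t" for t
  proof -
    have "\<beta> * S_closed t * I_closed t / (S_closed t + I_closed t)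
        = \<beta> * S_closed t * (I_closed t / (S_closed t + I_closed t))"
      by simp
    also have "\<dots> = \<beta> * I0 * growth t / denom t * S_closed t"
      by (simp add: I_closed_fraction)
    finally show ?thesis .
  qed
  have dS: "(S_closed has_real_derivative
      - \<beta> * S_closed t * I_closed t / (S_closed t + I_closed t)) (at t)" for t
    using S_closed_has_derivative[of t] by (simp add: incidence)
  have dI: "(I_closed has_real_derivative
      \<beta> * S_closed t * I_closed t / (S_closed t + I_closed t) - \<alpha> * I_closed t) (at t)" for t
  proof -
    have "(I_closed has_real_derivative
        I0 * damping t * ((\<beta> - \<alpha>) * growth t)
        + I0 * (- \<beta> * I0 * growth t / denom t * damping t) * growth t) (at t)"
      unfolding I_closed_def[abs_def]
      by (rule DERIV_mult'[OF DERIV_cmult[OF damping_has_derivative] growth_has_derivative])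
    moreover have "I0 * damping t * ((\<beta> - \<alpha>) * growth t)
        + I0 * (- \<beta> * I0 * growth t / denom t * damping t) * growth t
        = \<beta> * I0 * growth t / denom t * S_closed t - \<alpha> * I_closed t"
      using denom_pos[of t, unfolded denom_def]
      by (simp add: S_closed_def I_closed_def denom_def field_simps)
    ultimately show ?thesis
      by (simp add: incidence)
  qed
  have dR: "((\<lambda>t. 1 - S_closed t - I_closed t) has_real_derivative \<alpha> * I_closed t) (at t)" for t
    by (rule DERIV_cong[OF DERIV_diff[OF DERIV_diff[OF DERIV_const dS] dI]]) simp
  show ?thesis
    unfolding msir_solution_def using dS dI dR by (blast intro: has_field_derivative_at_within)
qed

lemma closed_form_unique_while_positive:
  assumes sol: "msir_solution \<alpha> \<beta> S I R" and init: "S 0 = S0" "I 0 = I0"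
    and pos: "\<And>s. s \<in> {0..b} \<Longrightarrow> S s > 0 \<and> S s + I s > 0"
    and t: "t \<in> {0..b}"
  shows "S t = S_closed t \<and> I t = I_closed t"
proof -
  note dS = msir_solution_within_interval(1)[OF sol]
    and dI = msir_solution_within_interval(2)[OF sol]
  have I_over_S: "I s = I0 / S0 * S s * growth s" if s: "s \<in> {0..b}" for s
  proof -
    define a where "a s = \<beta> * S s / (S s + I s) - \<alpha>" for s
    have "I s / (S s * growth s) = I 0 / (S 0 * growth 0)"
    proof (rule linear_ode_solutions_ratio_constant[OF _ _ _ s])
      fix r assume r: "r \<in> {0..b}"
      with pos have "S r > 0" "S r + I r > 0" by auto
      show "(I has_real_derivative a r * I r) (at r within {0..b})"
        using dI[OF r] by (rule DERIV_cong) (use \<open>S r + I r > 0\<close> in \<open>simp add: a_def field_simps\<close>)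
      show "((\<lambda>s. S s * growth s) has_real_derivative a r * (S r * growth r)) (at r within {0..b})"
        using DERIV_mult'[OF dS[OF r] growth_has_derivative[THEN has_field_derivative_at_within]]
        by (rule DERIV_cong) (use \<open>S r + I r > 0\<close> in \<open>simp add: a_def field_simps\<close>)
      show "S r * growth r \<noteq> 0"
        using \<open>S r > 0\<close> growth_pos[of r] by simp
    qed
    then show ?thesis
      using pos[OF s] growth_pos[of s] S0_pos init by (simp add: growth_def field_simps)
  qed
  have S_over_S_closed: "S s / S_closed s = S 0 / S_closed 0" if s: "s \<in> {0..b}" for s
  proof (rule linear_ode_solutions_ratio_constant[OF _ _ _ s])
    fix r assume r: "r \<in> {0..b}"
    have fraction: "I r / (S r + I r) = I0 * growth r / denom r"
      using I_over_S[OF r] pos[OF r] S0_pos denom_pos[of r, unfolded denom_def]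
      by (simp add: denom_def field_simps)
    show "(S has_real_derivative - \<beta> * I0 * growth r / denom r * S r) (at r within {0..b})"
    proof (rule DERIV_cong[OF dS[OF r]])
      have "- \<beta> * S r * I r / (S r + I r) = - \<beta> * (I r / (S r + I r)) * S r"
        by simp
      then show "- \<beta> * S r * I r / (S r + I r) = - \<beta> * I0 * growth r / denom r * S r"
        by (simp add: fraction)
    qed
  next
    fix r
    show "(S_closed has_real_derivative - \<beta> * I0 * growth r / denom r * S_closed r) (at r within {0..b})"
      by (rule has_field_derivative_at_within[OF S_closed_has_derivative])
    show "S_closed r \<noteq> 0"
      using S_closed_pos[of r] by simp
  qed
  have "S t = S_closed t"
    using S_over_S_closed[OF t] S_closed_pos[of t] init closed_form_at_0 S0_pos by (simp add: field_simps)
  moreover have "I t = I_closed t"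
    using I_over_S[OF t] \<open>S t = S_closed t\<close> S0_pos by (simp add: S_closed_def I_closed_def)
  ultimately show ?thesis ..
qed

lemma closed_form_unique:
  assumes sol: "msir_solution \<alpha> \<beta> S I R" and init: "S 0 = S0" "I 0 = I0" and t: "t \<ge> 0"
  shows "S t = S_closed t \<and> I t = I_closed t"
proof -
  have cont: "continuous_on {0..t} S" "continuous_on {0..t} I"
    using msir_solution_continuous[OF sol] by (auto elim: continuous_on_subset)
  have cont_closed: "continuous_on {0..t} S_closed" "continuous_on {0..t} I_closed"
    using msir_solution_continuous[OF closed_form_solves] by (auto elim: continuous_on_subset)
  have positive: "\<forall>s\<in>{0..t}. min (S s) (S s + I s) > 0"
  proof (rule positive_on_interval_by_continuation)
    show "continuous_on {0..t} (\<lambda>s. min (S s) (S s + I s))"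
      using cont by (intro continuous_on_min continuous_on_add)
    show "min (S 0) (S 0 + I 0) > 0"
      using init S0_pos I0_nonneg by simp
  next
    fix b assume b: "b \<in> {0<..t}" and before: "\<forall>s\<in>{0..<b}. min (S s) (S s + I s) > 0"
    have agree: "S s = S_closed s \<and> I s = I_closed s" if s: "s \<in> {0..<b}" for s
    proof (rule closed_form_unique_while_positive[OF sol init])
      fix r assume "r \<in> {0..s}"
      with s have "r \<in> {0..<b}" by simp
      with before show "S r > 0 \<and> S r + I r > 0" by simp
    qed (use s in simp)
    have sub: "{0..b} \<subseteq> {0..t}" using b by auto
    have "S b = S_closed b"
      by (rule continuous_on_eq_at_right_end[OF cont(1)[THEN continuous_on_subset, OF sub]
            cont_closed(1)[THEN continuous_on_subset, OF sub]]) (use b agree in simp_all)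
    moreover have "I b = I_closed b"
      by (rule continuous_on_eq_at_right_end[OF cont(2)[THEN continuous_on_subset, OF sub]
            cont_closed(2)[THEN continuous_on_subset, OF sub]]) (use b agree in simp_all)
    ultimately
    show "min (S b) (S b + I b) > 0"
      using S_closed_pos[of b] I_closed_nonneg[of b] by simp
  qed
  show ?thesis
  proof (rule closed_form_unique_while_positive[OF sol init])
    fix r assume "r \<in> {0..t}"
    with positive show "S r > 0 \<and> S r + I r > 0" by simp
  qed (use t in simp)
qed

end

theorem mainTheorem1:
  fixes \<alpha> \<beta> S0 I0 R0 :: real
  assumes "\<alpha> > 0" and "\<beta> > 0" and "\<beta> \<noteq> \<alpha>"
    and "S0 > 0" and "I0 \<ge> 0" and "S0 + I0 + R0 = 1"
  defines "\<tau> \<equiv> 1 / (\<beta> - \<alpha>)"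
  defines "Sx \<equiv> (\<lambda>t. S0 * ((S0 + I0) / (S0 + I0 * exp (t / \<tau>))) powr (\<beta> * \<tau>))"
      and "Ix \<equiv> (\<lambda>t. I0 * ((S0 + I0) / (S0 + I0 * exp (t / \<tau>))) powr (\<beta> * \<tau>) * exp (t / \<tau>))"
      and "Rx \<equiv> (\<lambda>t. 1 - (S0 + I0) powr (\<beta> * \<tau>) / (S0 + I0 * exp (t / \<tau>)) powr (\<beta> * \<tau> - 1))"
  shows
    "(Sx 0 = S0 \<and> Ix 0 = I0 \<and> Rx 0 = R0 \<and>
      (\<forall>t\<ge>0.
        (Sx has_real_derivative (- \<beta> * Sx t * Ix t / (Sx t + Ix t))) (at t within {0..}) \<and>
        (Ix has_real_derivative (\<beta> * Sx t * Ix t / (Sx t + Ix t) - \<alpha> * Ix t)) (at t within {0..}) \<and>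
        (Rx has_real_derivative (\<alpha> * Ix t)) (at t within {0..})))
     \<and>
     (\<forall>S I R :: real \<Rightarrow> real.
        S 0 = S0 \<and> I 0 = I0 \<and> R 0 = R0 \<and>
        (\<forall>t\<ge>0.
          (S has_real_derivative (- \<beta> * S t * I t / (S t + I t))) (at t within {0..}) \<and>
          (I has_real_derivative (\<beta> * S t * I t / (S t + I t) - \<alpha> * I t)) (at t within {0..}) \<and>
          (R has_real_derivative (\<alpha> * I t)) (at t within {0..}))
        \<longrightarrow> (\<forall>t\<ge>0. S t = Sx t \<and> I t = Ix t \<and> R t = Rx t))"
proof -
  interpret msir_closed_form \<alpha> \<beta> S0 I0
    using assms by unfold_locales auto
  have Sx: "Sx = S_closed" and Ix: "Ix = I_closed"
    by (simp_all add: fun_eq_iff Sx_def Ix_def S_closed_def I_closed_def damping_def denom_def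
        growth_def \<tau>_def)
  have Rx: "Rx = (\<lambda>t. 1 - S_closed t - I_closed t)"
  proof
    fix t
    show "Rx t = 1 - S_closed t - I_closed t"
      using S_closed_plus_I_closed_powr[of t] by (simp add: Rx_def denom_def growth_def \<tau>_def)
  qed
  have uniqueness: "S t = Sx t \<and> I t = Ix t \<and> R t = Rx t"
    if sol: "msir_solution \<alpha> \<beta> S I R" and init: "S 0 = S0" "I 0 = I0" "R 0 = R0" and t: "t \<ge> 0"
    for S I R :: "real \<Rightarrow> real" and t
  proof -
    have "S t = S_closed t \<and> I t = I_closed t"
      using closed_form_unique[OF sol init(1,2) t] .
    moreover have "R t = 1 - S t - I t"
      using msir_population_conserved[OF sol t] init assms(6) by simp
    ultimately show ?thesis by (simp add: Sx Ix Rx)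
  qed
  have existence: "Sx 0 = S0 \<and> Ix 0 = I0 \<and> Rx 0 = R0 \<and> msir_solution \<alpha> \<beta> Sx Ix Rx"
    using closed_form_solves closed_form_at_0 assms(6) by (simp add: Sx Ix Rx)
  show ?thesis
    unfolding msir_solution_def[symmetric] using existence uniqueness by blast
qed

end
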